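(* Let $p\ge3$ be a prime and let $c>0$. Let $D$ be a probability distribution on $\mathbb{F}_p$ with $D(x)\le1-c$ for every $x\in\mathbb{F}_p$. Then for every positive integer $M\ge 2p^2\log p/(c\pi^2)$, the distribution $MD$ satisfies $|MD(x)-p^{-1}|\le p^{-2}$ for each $x\in\mathbb{F}_p$.
   Context: For a probability distribution $D$ on $\mathbb{F}_p$ and a positive integer $M$, $MD$ denotes the $M$-fold convolution $D+\dots+D$, i.e. the distribution of the sum of $M$ independent random variables each with distribution $D$. *)

theory Defs
  imports "HOL-Probability.Probability_Mass_Function"
begin

text \<open>F_p is modelled as the residues {0..<p} (type nat); a distribution on F_p is a
 nat pmf whose support lies in {..<p}.\<close>

definition conv_mod :: "nat \<Rightarrow> nat pmf \<Rightarrow> nat pmf \<Rightarrow> nat pmf" where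
  "conv_mod p A B = map_pmf (\<lambda>(a, b). (a + b) mod p) (pair_pmf A B)"

text \<open>M-fold convolution M D (only meaningful for M \<ge> 1).\<close>
fun mfold_conv :: "nat \<Rightarrow> nat \<Rightarrow> nat pmf \<Rightarrow> nat pmf" where
  "mfold_conv p 0 D = return_pmf 0"
| "mfold_conv p (Suc 0) D = D"
| "mfold_conv p (Suc (Suc m)) D = conv_mod p D (mfold_conv p (Suc m) D)"

end

theory Submission
  imports Defs "HOL-Computational_Algebra.Primes"
begin

(* The Fourier coefficients of the M-fold convolution MD are the M-th
   powers of those of D, and Fourier inversion bounds p |MD(x) - 1/p| by the sum of the moduli of
   the nontrivial coefficients D^(k), k <> 0. For such k the values w^(kx), w = exp (2 pi i / p),
   are distinct p-th roots of unity, pairwise at angle at least 2 pi / p, which gives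
   |D^(k)|^2 <= 1 - 2 sin^2 (pi/p) (1 - sum_x D(x)^2). The bound D(x) <= 1 - c controls the
   collision probability sum_x D(x)^2, and Taylor estimates turn this into
   |D^(k)|^2 <= exp (-2 c pi^2 / p^2); the lower bound on M then makes |D^(k)|^M <= 1/p^2. *)

lemma cos_ge_one_minus_sq_half: "1 - x\<^sup>2 / 2 \<le> cos (x :: real)"
proof -
  have nonneg: "1 - t\<^sup>2 / 2 \<le> cos t" if "0 \<le> t" for t :: real
  proof -
    have "(\<lambda>t. cos t - 1 + t\<^sup>2 / 2) 0 \<le> (\<lambda>t. cos t - 1 + t\<^sup>2 / 2) t"
    proof (rule DERIV_nonneg_imp_nondecreasing[OF that])
      fix v :: real assume "0 \<le> v"
      then show "\<exists>y. ((\<lambda>t. cos t - 1 + t\<^sup>2 / 2) has_real_derivative y) (at v) \<and> y \<ge> 0"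
        by (intro exI[of _ "v - sin v"]) (auto intro!: derivative_eq_intros simp: sin_x_le_x)
    qed
    then show ?thesis by simp
  qed
  show ?thesis
    using nonneg[of x] nonneg[of "-x"] by (cases "0 \<le> x") auto
qed

lemma sin_ge_cubic:
  fixes x :: real assumes "0 \<le> x" shows "x - x ^ 3 / 6 \<le> sin x"
proof -
  have "(\<lambda>t. sin t - t + t ^ 3 / 6) 0 \<le> (\<lambda>t. sin t - t + t ^ 3 / 6) x"
  proof (rule DERIV_nonneg_imp_nondecreasing[OF assms])
    fix t :: real
    show "\<exists>y. ((\<lambda>t. sin t - t + t ^ 3 / 6) has_real_derivative y) (at t) \<and> y \<ge> 0"
      by (intro exI[of _ "cos t - 1 + t\<^sup>2 / 2"])
        (use cos_ge_one_minus_sq_half[of t] in \<open>auto intro!: derivative_eq_intros\<close>)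
  qed
  then show ?thesis by simp
qed

lemma exp_minus_le_quadratic:
  fixes x :: real assumes "0 \<le> x" shows "exp (-x) \<le> 1 - x + x\<^sup>2 / 2"
proof -
  have "(\<lambda>t. 1 - t + t\<^sup>2 / 2 - exp (-t)) 0 \<le> (\<lambda>t. 1 - t + t\<^sup>2 / 2 - exp (-t)) x"
  proof (rule DERIV_nonneg_imp_nondecreasing[OF assms])
    fix t :: real
    show "\<exists>y. ((\<lambda>t. 1 - t + t\<^sup>2 / 2 - exp (-t)) has_real_derivative y) (at t) \<and> y \<ge> 0"
      by (intro exI[of _ "t - 1 + exp (-t)"])
        (use exp_minus_ge[of t] in \<open>auto intro!: derivative_eq_intros\<close>)
  qed
  then show ?thesis by simp
qed

lemma exp_minus_ge_cubic:
  fixes x :: real assumes "0 \<le> x" shows "1 - x + x\<^sup>2 / 2 - x ^ 3 / 6 \<le> exp (-x)"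
proof -
  have "(\<lambda>t. exp (-t) - (1 - t + t\<^sup>2 / 2 - t ^ 3 / 6)) 0
    \<le> (\<lambda>t. exp (-t) - (1 - t + t\<^sup>2 / 2 - t ^ 3 / 6)) x"
  proof (rule DERIV_nonneg_imp_nondecreasing[OF assms])
    fix t :: real assume "0 \<le> t"
    then show "\<exists>y. ((\<lambda>t. exp (-t) - (1 - t + t\<^sup>2 / 2 - t ^ 3 / 6)) has_real_derivative y) (at t)
      \<and> y \<ge> 0"
      by (intro exI[of _ "1 - t + t\<^sup>2 / 2 - exp (-t)"])
        (use exp_minus_le_quadratic[of t] in \<open>auto intro!: derivative_eq_intros\<close>)
  qed
  then show ?thesis by simp
qed

lemma sin_sq_ge_cubic_sq:
  fixes u :: real assumes "0 \<le> u" "u\<^sup>2 \<le> 6"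
  shows "u\<^sup>2 * (1 - u\<^sup>2 / 6)\<^sup>2 \<le> sin u ^ 2"
proof -
  have "u - u ^ 3 / 6 = u * (1 - u\<^sup>2 / 6)"
    by (simp add: power2_eq_square power3_eq_cube algebra_simps)
  with assms have "0 \<le> u - u ^ 3 / 6" by simp
  then have "(u - u ^ 3 / 6)\<^sup>2 \<le> sin u ^ 2"
    using sin_ge_cubic[OF assms(1)] by (intro power_mono) auto
  moreover have "(u - u ^ 3 / 6)\<^sup>2 = u\<^sup>2 * (1 - u\<^sup>2 / 6)\<^sup>2"
    by (simp add: power2_eq_square power3_eq_cube algebra_simps)
  ultimately show ?thesis by simp
qed

lemma sin_sq_lower_bounds:
  fixes u :: real
  assumes "0 \<le> u" "u\<^sup>2 \<le> 6/5"
  shows "u\<^sup>2 - (u\<^sup>2)\<^sup>2 / 2 + (u\<^sup>2) ^ 3 / 6 \<le> sin u ^ 2"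
    and "u\<^sup>2 / 2 \<le> sin u ^ 2"
    and "1 - exp (- u\<^sup>2) \<le> sin u ^ 2"
    and "u\<^sup>2 * exp (- u\<^sup>2) \<le> sin u ^ 2"
proof -
  define y where "y = u\<^sup>2"
  have y: "0 \<le> y" "y \<le> 6/5"
    using assms by (auto simp: y_def)
  have s: "y * (1 - y / 6)\<^sup>2 \<le> sin u ^ 2"
    unfolding y_def using assms by (intro sin_sq_ge_cubic_sq) auto
  have cubic: "y - y\<^sup>2 / 2 + y ^ 3 / 6 \<le> sin u ^ 2"
  proof -
    have "y * (1 - y / 6)\<^sup>2 - (y - y\<^sup>2 / 2 + y ^ 3 / 6) = y\<^sup>2 * (6 - 5 * y) / 36"
      by (simp add: power2_eq_square power3_eq_cube algebra_simps)
    moreover have "0 \<le> y\<^sup>2 * (6 - 5 * y) / 36"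
      using y by simp
    ultimately show ?thesis
      using s by linarith
  qed
  have half: "y / 2 \<le> sin u ^ 2"
  proof -
    have "(4/5)\<^sup>2 \<le> (1 - y / 6)\<^sup>2"
      using y by (intro power_mono) auto
    then have "y * (1/2) \<le> y * (1 - y / 6)\<^sup>2"
      using y by (intro mult_left_mono) (auto simp: power2_eq_square)
    then show ?thesis
      using s by simp
  qed
  have "1 - exp (-y) \<le> y - y\<^sup>2 / 2 + y ^ 3 / 6"
    using exp_minus_ge_cubic[OF y(1)] by simp
  with cubic have one_minus_exp: "1 - exp (-y) \<le> sin u ^ 2"
    by linarith
  have "y * exp (-y) \<le> y * (1 - y + y\<^sup>2 / 2)"
    using exp_minus_le_quadratic[OF y(1)] y by (intro mult_left_mono) auto
  also have "\<dots> \<le> y * (1 - y / 6)\<^sup>2"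
  proof -
    have "y * (1 - y / 6)\<^sup>2 - y * (1 - y + y\<^sup>2 / 2) = y\<^sup>2 * (24 - 17 * y) / 36"
      by (simp add: power2_eq_square power3_eq_cube algebra_simps)
    moreover have "0 \<le> y\<^sup>2 * (24 - 17 * y) / 36"
      using y by simp
    ultimately show ?thesis
      by linarith
  qed
  finally have mult_exp: "y * exp (-y) \<le> sin u ^ 2"
    using s by simp
  from cubic half one_minus_exp mult_exp show
    "u\<^sup>2 - (u\<^sup>2)\<^sup>2 / 2 + (u\<^sup>2) ^ 3 / 6 \<le> sin u ^ 2" "u\<^sup>2 / 2 \<le> sin u ^ 2"
    "1 - exp (- u\<^sup>2) \<le> sin u ^ 2" "u\<^sup>2 * exp (- u\<^sup>2) \<le> sin u ^ 2"
    by (simp_all add: y_def)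
qed

text \<open>For \<open>u = pi / p\<close> and \<open>P = 1 - (\<Sum>x<p. pmf D x ^ 2)\<close> the left-hand side below is the
  bound on \<open>norm (dft p D k)\<^sup>2\<close> of \<open>norm_dft_sq_le\<close>. Since \<open>sin u < u\<close>, the crude bound
  \<open>c \<le> P\<close> is not enough; the second lemma covers distributions with an atom of mass at least
  \<open>1/2\<close>.\<close>

lemma one_minus_sin_sq_le_exp_spread:
  fixes u c P :: real
  assumes u: "0 \<le> u" "u\<^sup>2 \<le> 6/5" and P: "1/2 \<le> P" "c \<le> P"
  shows "1 - 2 * sin u ^ 2 * P \<le> exp (-2 * c * u\<^sup>2)"
proof -
  define y where "y = u\<^sup>2"
  define s where "s = sin u ^ 2"
  have y: "0 \<le> y"
    by (simp add: y_def)
  note one_minus_exp = sin_sq_lower_bounds(3)[OF u, folded y_def s_def]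
  note mult_exp = sin_sq_lower_bounds(4)[OF u, folded y_def s_def]
  have "1 - 2 * s * P = (1 - s) - (2 * P - 1) * s"
    by (simp add: algebra_simps)
  also have "\<dots> \<le> exp (-y) - (2 * P - 1) * (y * exp (-y))"
  proof -
    have "(2 * P - 1) * (y * exp (-y)) \<le> (2 * P - 1) * s"
      using mult_exp P by (intro mult_left_mono) auto
    then show ?thesis
      using one_minus_exp by linarith
  qed
  also have "\<dots> = exp (-y) * (1 - (2 * P - 1) * y)"
    by (simp add: algebra_simps)
  also have "\<dots> \<le> exp (-y) * exp (- ((2 * P - 1) * y))"
    by (intro mult_left_mono exp_minus_ge) auto
  also have "\<dots> = exp (-2 * P * y)"
    by (simp add: exp_add[symmetric] algebra_simps)
  also have "\<dots> \<le> exp (-2 * c * y)"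
    using P y by (simp add: mult_right_mono)
  finally show ?thesis
    by (simp add: s_def y_def)
qed

lemma one_minus_sin_sq_le_exp_concentrated:
  fixes u c P :: real
  assumes u: "0 \<le> u" "u\<^sup>2 \<le> 6/5" and c: "0 < c" "c \<le> 1/2" and P: "2 * c * (1 - c) \<le> P"
  shows "1 - 2 * sin u ^ 2 * P \<le> exp (-2 * c * u\<^sup>2)"
proof -
  define y where "y = u\<^sup>2"
  define s where "s = sin u ^ 2"
  have y: "0 \<le> y"
    by (simp add: y_def)
  note cubic = sin_sq_lower_bounds(1)[OF u, folded y_def s_def]
  note half = sin_sq_lower_bounds(2)[OF u, folded y_def s_def]
  define z where "z = 2 * c * y"
  have "1 - exp (-z) \<le> z - z\<^sup>2 / 2 + z ^ 3 / 6"
    using exp_minus_ge_cubic[of z] c y by (simp add: z_def)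
  also have "\<dots> = c * (2 * y - 2 * c * y\<^sup>2 + 4/3 * c\<^sup>2 * y ^ 3)"
    by (simp add: z_def power2_eq_square power3_eq_cube algebra_simps)
  also have "\<dots> \<le> c * (2 * y - 2 * c * y\<^sup>2 + 2/3 * c * y ^ 3)"
  proof -
    have "c\<^sup>2 * y ^ 3 \<le> (c / 2) * y ^ 3"
      using c y by (intro mult_right_mono) (auto simp: power2_eq_square)
    then show ?thesis
      using c by (intro mult_left_mono) auto
  qed
  also have "\<dots> \<le> c * (4 * s * (1 - c))"
  proof -
    \<comment> \<open>The difference is affine in \<open>c\<close>, so it suffices that it is nonnegative at \<open>c = 0\<close> and \<open>c = 1/2\<close>.\<close>
    have "4 * s * (1 - c) - (2 * y - 2 * c * y\<^sup>2 + 2/3 * c * y ^ 3)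
      = (1 - 2 * c) * (4 * s - 2 * y) + 2 * c * (2 * s - 2 * y + y\<^sup>2 - y ^ 3 / 3)"
      by (simp add: algebra_simps)
    moreover have "0 \<le> (1 - 2 * c) * (4 * s - 2 * y) + 2 * c * (2 * s - 2 * y + y\<^sup>2 - y ^ 3 / 3)"
      using c half cubic by (intro add_nonneg_nonneg mult_nonneg_nonneg) auto
    ultimately show ?thesis
      using c by (intro mult_left_mono) auto
  qed
  also have "\<dots> = 2 * s * (2 * c * (1 - c))"
    by (simp add: algebra_simps)
  also have "\<dots> \<le> 2 * s * P"
    using P half y by (intro mult_left_mono) auto
  finally show ?thesis
    by (simp add: z_def s_def y_def mult.assoc)
qed

lemma sum_sq_le_sq_sum:
  fixes f :: "'a \<Rightarrow> real"
  assumes "finite A" "\<And>x. x \<in> A \<Longrightarrow> 0 \<le> f x"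
  shows "(\<Sum>x\<in>A. f x ^ 2) \<le> (sum f A)\<^sup>2"
proof -
  have "(\<Sum>x\<in>A. f x ^ 2) \<le> (\<Sum>x\<in>A. f x * sum f A)"
    using assms by (intro sum_mono) (auto simp: power2_eq_square intro: mult_left_mono member_le_sum)
  also have "\<dots> = (sum f A)\<^sup>2"
    by (simp add: power2_eq_square sum_distrib_right)
  finally show ?thesis .
qed

lemma sum_sq_le_bound:
  fixes d :: "'a \<Rightarrow> real"
  assumes "\<And>x. x \<in> A \<Longrightarrow> 0 \<le> d x" "\<And>x. x \<in> A \<Longrightarrow> d x \<le> m" "sum d A = 1"
  shows "(\<Sum>x\<in>A. d x ^ 2) \<le> m"
proof -
  have "(\<Sum>x\<in>A. d x ^ 2) \<le> (\<Sum>x\<in>A. d x * m)"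
    using assms by (intro sum_mono) (auto simp: power2_eq_square intro: mult_left_mono)
  also have "\<dots> = m"
    using assms(3) by (simp add: sum_distrib_right[symmetric])
  finally show ?thesis .
qed

lemma sum_sq_le_sq_add_sq_compl:
  fixes d :: "'a \<Rightarrow> real"
  assumes "finite A" "\<And>x. x \<in> A \<Longrightarrow> 0 \<le> d x" "sum d A = 1" "a \<in> A"
  shows "(\<Sum>x\<in>A. d x ^ 2) \<le> d a ^ 2 + (1 - d a)\<^sup>2"
proof -
  have rest: "sum d (A - {a}) = 1 - d a"
    using assms by (simp add: sum_diff1)
  have "(\<Sum>x\<in>A. d x ^ 2) = d a ^ 2 + (\<Sum>x\<in>A - {a}. d x ^ 2)"
    using assms by (simp add: sum.remove)
  also have "(\<Sum>x\<in>A - {a}. d x ^ 2) \<le> (sum d (A - {a}))\<^sup>2"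
    using assms by (intro sum_sq_le_sq_sum) auto
  finally show ?thesis by (simp add: rest)
qed

lemma one_minus_sin_sq_collision_le_exp:
  fixes d :: "'a \<Rightarrow> real" and u c :: real
  assumes "finite A" "\<And>x. x \<in> A \<Longrightarrow> 0 \<le> d x" "sum d A = 1" "\<And>x. x \<in> A \<Longrightarrow> d x \<le> 1 - c"
    and c: "0 < c" and u: "0 \<le> u" "u\<^sup>2 \<le> 6/5"
  shows "1 - 2 * sin u ^ 2 * (1 - (\<Sum>x\<in>A. d x ^ 2)) \<le> exp (-2 * c * u\<^sup>2)"
proof (cases "\<exists>a\<in>A. 1/2 \<le> d a")
  case True
  then obtain a where a: "a \<in> A" "1/2 \<le> d a"
    by blast
  have c_le: "c \<le> 1 - d a" "1 - d a \<le> 1/2"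
    using assms(4)[OF a(1)] a(2) by auto
  have "c * (1 - c) \<le> (1 - d a) * d a"
  proof -
    have "(1 - d a) * d a - c * (1 - c) = (1 - d a - c) * (d a - c)"
      by (simp add: algebra_simps)
    moreover have "0 \<le> (1 - d a - c) * (d a - c)"
      using c_le by (intro mult_nonneg_nonneg) auto
    ultimately show ?thesis
      by linarith
  qed
  moreover have "2 * ((1 - d a) * d a) \<le> 1 - (\<Sum>x\<in>A. d x ^ 2)"
    using sum_sq_le_sq_add_sq_compl[OF assms(1-3) a(1)] by (simp add: power2_eq_square algebra_simps)
  ultimately have "2 * c * (1 - c) \<le> 1 - (\<Sum>x\<in>A. d x ^ 2)"
    by linarith
  then show ?thesis
    using c c_le by (intro one_minus_sin_sq_le_exp_concentrated[OF u]) auto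
next
  case False
  have "(\<Sum>x\<in>A. d x ^ 2) \<le> 1/2"
    using False assms(2,3) by (intro sum_sq_le_bound) force+
  moreover have "(\<Sum>x\<in>A. d x ^ 2) \<le> 1 - c"
    using assms(2-4) by (intro sum_sq_le_bound)
  ultimately show ?thesis
    by (intro one_minus_sin_sq_le_exp_spread[OF u]) auto
qed

lemma norm_sum_sq_eq:
  fixes d :: "'a \<Rightarrow> real" and z :: "'a \<Rightarrow> complex"
  shows "(norm (\<Sum>x\<in>A. of_real (d x) * z x))\<^sup>2 = (\<Sum>x\<in>A. \<Sum>y\<in>A. d x * d y * Re (z x * cnj (z y)))"
proof -
  define w where "w = (\<Sum>x\<in>A. of_real (d x) * z x)"
  have "w * cnj w = (\<Sum>x\<in>A. \<Sum>y\<in>A. of_real (d x * d y) * (z x * cnj (z y)))"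
    by (simp add: w_def sum_product mult_ac)
  moreover have "(norm w)\<^sup>2 = Re (w * cnj w)"
    unfolding cmod_power2 by (simp add: power2_eq_square)
  ultimately show ?thesis
    by (simp add: w_def)
qed

lemma norm_sum_sq_le_collision:
  fixes d :: "'a \<Rightarrow> real" and z :: "'a \<Rightarrow> complex"
  assumes "finite A" "\<And>x. x \<in> A \<Longrightarrow> 0 \<le> d x" "sum d A = 1"
    and "\<And>x. x \<in> A \<Longrightarrow> norm (z x) \<le> 1"
    and "\<And>x y. x \<in> A \<Longrightarrow> y \<in> A \<Longrightarrow> x \<noteq> y \<Longrightarrow> Re (z x * cnj (z y)) \<le> 1 - s"
  shows "(norm (\<Sum>x\<in>A. of_real (d x) * z x))\<^sup>2 \<le> 1 - s * (1 - (\<Sum>x\<in>A. d x ^ 2))"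
proof -
  have "(norm (\<Sum>x\<in>A. of_real (d x) * z x))\<^sup>2
      = (\<Sum>x\<in>A. \<Sum>y\<in>A. d x * d y * Re (z x * cnj (z y)))"
    by (rule norm_sum_sq_eq)
  also have "\<dots> \<le> (\<Sum>x\<in>A. \<Sum>y\<in>A. d x * d y * ((1 - s) + s * (if x = y then 1 else 0)))"
  proof (intro sum_mono mult_left_mono)
    fix x y assume xy: "x \<in> A" "y \<in> A"
    show "Re (z x * cnj (z y)) \<le> (1 - s) + s * (if x = y then 1 else 0)"
    proof (cases "x = y")
      case True
      have "Re (z x * cnj (z x)) = (norm (z x))\<^sup>2"
        unfolding cmod_power2 by (simp add: power2_eq_square)
      also have "\<dots> \<le> 1"
        using assms(4)[OF xy(1)] by (simp add: power_le_one)
      finally show ?thesis using True by simp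
    qed (use assms(5) xy in auto)
    show "0 \<le> d x * d y" using assms(2) xy by simp
  qed
  also have "\<dots> = (\<Sum>x\<in>A. (1 - s) * (d x * sum d A) + s * d x ^ 2)"
  proof (intro sum.cong refl)
    fix x assume x: "x \<in> A"
    have "(\<Sum>y\<in>A. d x * d y * ((1 - s) + s * (if x = y then 1 else 0)))
        = (\<Sum>y\<in>A. (1 - s) * (d x * d y) + (if y = x then s * d x ^ 2 else 0))"
      by (intro sum.cong refl) (auto simp: algebra_simps power2_eq_square)
    also have "\<dots> = (1 - s) * (d x * sum d A) + s * d x ^ 2"
      using assms(1) x by (simp add: sum.distrib sum_distrib_left)
    finally show "(\<Sum>y\<in>A. d x * d y * ((1 - s) + s * (if x = y then 1 else 0)))
        = (1 - s) * (d x * sum d A) + s * d x ^ 2" .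
  qed
  also have "\<dots> = (\<Sum>x\<in>A. (1 - s) * d x + s * d x ^ 2)"
    using assms(3) by simp
  also have "\<dots> = (1 - s) * sum d A + s * (\<Sum>x\<in>A. d x ^ 2)"
    by (simp add: sum.distrib sum_distrib_left)
  also have "\<dots> = 1 - s * (1 - (\<Sum>x\<in>A. d x ^ 2))"
    using assms(3) by (simp add: algebra_simps)
  finally show ?thesis .
qed

definition unity_root :: "nat \<Rightarrow> complex" where
  "unity_root p = cis (2 * pi / real p)"

lemma unity_root_pow: "unity_root p ^ n = cis (2 * pi * real n / real p)"
  unfolding unity_root_def Complex.DeMoivre by (simp add: field_simps)

lemma norm_unity_root_pow [simp]: "norm (unity_root p ^ n) = 1"
  by (simp add: unity_root_pow)

lemma unity_root_pow_self: "0 < p \<Longrightarrow> unity_root p ^ p = 1"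
  by (simp add: unity_root_pow)

lemma unity_root_pow_mod:
  assumes "0 < p" shows "unity_root p ^ (n mod p) = unity_root p ^ n"
proof -
  have "unity_root p ^ n = unity_root p ^ (p * (n div p) + n mod p)"
    by simp
  also have "\<dots> = (unity_root p ^ p) ^ (n div p) * unity_root p ^ (n mod p)"
    by (simp only: power_add power_mult)
  finally show ?thesis
    using unity_root_pow_self[OF assms] by simp
qed

lemma unity_root_pow_eq_1_iff:
  assumes "0 < p" shows "unity_root p ^ n = 1 \<longleftrightarrow> p dvd n"
proof
  assume "unity_root p ^ n = 1"
  then have "cos (2 * pi * real n / real p) = 1"
    by (simp add: unity_root_pow complex_eq_iff)
  then obtain j :: int where "2 * pi * real n / real p = j * 2 * pi"
    by (auto simp: cos_one_2pi_int)
  then have "real n = real p * j"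
    using assms by (simp add: field_simps)
  then have "int n = int p * j"
    by (metis of_int_eq_iff of_int_mult of_int_of_nat_eq)
  then show "p dvd n"
    by (metis dvd_triv_left int_dvd_int_iff)
next
  assume "p dvd n"
  then show "unity_root p ^ n = 1"
    using unity_root_pow_mod[OF assms, of n] by simp
qed

lemma sum_unity_root_pow:
  assumes "0 < p"
  shows "(\<Sum>k<p. unity_root p ^ (k * n)) = (if p dvd n then of_nat p else 0)"
proof -
  have pow: "unity_root p ^ (k * n) = (unity_root p ^ n) ^ k" for k
    by (metis power_mult mult.commute)
  show ?thesis
  proof (cases "p dvd n")
    case True
    then have "unity_root p ^ n = 1"
      using unity_root_pow_eq_1_iff[OF assms] by simp
    with True show ?thesis by (simp add: pow)
  next
    case False
    have "(unity_root p ^ n) ^ p = 1"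
      using unity_root_pow_self[OF assms] by (metis power_mult mult.commute power_one)
    with False show ?thesis
      using unity_root_pow_eq_1_iff[OF assms] by (simp add: pow geometric_sum)
  qed
qed

lemma cos_le_cos_two_pi_div:
  assumes p: "0 < p" and r: "0 < r" "2 * r \<le> p"
  shows "cos (2 * pi * real r / real p) \<le> cos (2 * pi / real p)"
proof (rule cos_monotone_0_pi_le)
  have "2 * pi * 1 \<le> 2 * pi * real r"
    using r by (intro mult_left_mono) auto
  then show "2 * pi / real p \<le> 2 * pi * real r / real p"
    by (intro divide_right_mono) auto
  have "pi * (2 * real r) \<le> pi * real p"
    using r by (intro mult_left_mono) auto
  then show "2 * pi * real r / real p \<le> pi"
    using p by (simp add: pos_divide_le_eq)
qed simp

lemma Re_unity_root_pow_le:
  assumes p: "0 < p" and n: "\<not> p dvd n"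
  shows "Re (unity_root p ^ n) \<le> cos (2 * pi / real p)"
proof -
  define r where "r = n mod p"
  have r: "0 < r" "r < p"
    using p n by (auto simp: r_def dvd_eq_mod_eq_0)
  have "unity_root p ^ n = unity_root p ^ r"
    by (simp add: r_def unity_root_pow_mod[OF p])
  then have "Re (unity_root p ^ n) = cos (2 * pi * real r / real p)"
    by (simp add: unity_root_pow)
  also have "\<dots> \<le> cos (2 * pi / real p)"
  proof (cases "2 * r \<le> p")
    case True
    then show ?thesis using cos_le_cos_two_pi_div p r by blast
  next
    case False
    have "2 * pi * real (p - r) / real p = 2 * pi * (real p - real r) / real p"
      using r by simp
    also have "\<dots> = 2 * pi - 2 * pi * real r / real p"
      using p by (simp add: diff_divide_distrib right_diff_distrib)
    finally have "cos (2 * pi * real r / real p) = cos (2 * pi * real (p - r) / real p)"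
      by simp
    also have "\<dots> \<le> cos (2 * pi / real p)"
      using False r p by (intro cos_le_cos_two_pi_div) auto
    finally show ?thesis .
  qed
  finally show ?thesis .
qed

definition dft :: "nat \<Rightarrow> nat pmf \<Rightarrow> nat \<Rightarrow> complex" where
  "dft p P k = (\<Sum>x<p. complex_of_real (pmf P x) * unity_root p ^ (k * x))"

lemma dft_eq_expectation:
  assumes "set_pmf P \<subseteq> {..<p}"
  shows "dft p P k = measure_pmf.expectation P (\<lambda>x. unity_root p ^ (k * x))"
  unfolding dft_def using assms
  by (subst integral_measure_pmf[of "{..<p}"]) (auto simp: scaleR_conv_of_real)

lemma set_pmf_conv_mod: "0 < p \<Longrightarrow> set_pmf (conv_mod p A B) \<subseteq> {..<p}"
  by (auto simp: conv_mod_def)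

lemma dft_conv_mod:
  assumes p: "0 < p" and A: "set_pmf A \<subseteq> {..<p}" and B: "set_pmf B \<subseteq> {..<p}"
  shows "dft p (conv_mod p A B) k = dft p A k * dft p B k"
proof -
  let ?e = "\<lambda>x. unity_root p ^ (k * x)"
  have e_mod: "?e ((a + b) mod p) = ?e a * ?e b" for a b
    by (metis p unity_root_pow_mod mod_mult_right_eq distrib_left power_add)
  have "dft p (conv_mod p A B) k = measure_pmf.expectation (pair_pmf A B) (\<lambda>ab. ?e (fst ab) * ?e (snd ab))"
    using set_pmf_conv_mod[OF p] 
    by (simp add: dft_eq_expectation conv_mod_def case_prod_beta e_mod)
  also have "\<dots> = (\<Sum>ab\<in>{..<p} \<times> {..<p}. pmf (pair_pmf A B) ab *\<^sub>R (?e (fst ab) * ?e (snd ab)))"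
    using A B by (intro integral_measure_pmf) auto
  also have "\<dots> = (\<Sum>ab\<in>{..<p} \<times> {..<p}.
      (of_real (pmf A (fst ab)) * ?e (fst ab)) * (of_real (pmf B (snd ab)) * ?e (snd ab)))"
    by (intro sum.cong refl) (auto simp: pmf_pair scaleR_conv_of_real algebra_simps)
  also have "\<dots> = dft p A k * dft p B k"
    by (simp add: dft_def sum_product sum.cartesian_product case_prod_beta)
  finally show ?thesis .
qed

lemma dft_0:
  assumes "set_pmf P \<subseteq> {..<p}" shows "dft p P 0 = 1"
  using assms by (simp add: dft_eq_expectation)

lemma set_pmf_mfold_conv:
  "0 < p \<Longrightarrow> set_pmf D \<subseteq> {..<p} \<Longrightarrow> set_pmf (mfold_conv p M D) \<subseteq> {..<p}"
  by (induction p M D rule: mfold_conv.induct) (auto simp: set_pmf_conv_mod)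

lemma mfold_conv_Suc:
  "0 < M \<Longrightarrow> mfold_conv p (Suc M) D = conv_mod p D (mfold_conv p M D)"
  by (cases M) auto

lemma dft_mfold_conv:
  assumes "0 < p" "set_pmf D \<subseteq> {..<p}" "0 < M"
  shows "dft p (mfold_conv p M D) k = dft p D k ^ M"
  using assms(3)
proof (induction M rule: nat_induct_non_zero)
  case (Suc M)
  then show ?case
    using assms(1,2) set_pmf_mfold_conv[OF assms(1,2)]
    by (simp add: mfold_conv_Suc dft_conv_mod)
qed simp

lemma dvd_add_diff_iff_eq:
  fixes x y p :: nat
  assumes "x < p" "y < p"
  shows "p dvd y + p - x \<longleftrightarrow> y = x"
proof (cases "x \<le> y")
  case True
  then have "y + p - x = (y - x) + p"
    by simp
  then have "p dvd y + p - x \<longleftrightarrow> p dvd y - x"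
    by (simp only: dvd_add_triv_right_iff)
  also have "\<dots> \<longleftrightarrow> y - x = 0"
    using assms by (auto dest: dvd_imp_le)
  finally show ?thesis
    using True by simp
next
  case False
  then have "0 < y + p - x" "y + p - x < p"
    using assms by auto
  then show ?thesis
    using False by (auto dest: dvd_imp_le)
qed

lemma dft_inversion:
  assumes p: "0 < p" and P: "set_pmf P \<subseteq> {..<p}" and x: "x < p"
  shows "(\<Sum>k<p. dft p P k * unity_root p ^ (k * (p - x))) = of_nat p * of_real (pmf P x)"
proof -
  \<comment> \<open>\<open>k * (p - x)\<close> plays the role of \<open>-k x\<close> modulo \<open>p\<close>.\<close>
  have "(\<Sum>k<p. dft p P k * unity_root p ^ (k * (p - x)))
      = (\<Sum>y<p. of_real (pmf P y) * (\<Sum>k<p. unity_root p ^ (k * (y + p - x))))"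
    using x unfolding dft_def sum_distrib_right sum_distrib_left
    by (subst sum.swap) (simp add: algebra_simps power_add[symmetric])
  also have "\<dots> = (\<Sum>y<p. if y = x then of_real (pmf P y) * of_nat p else 0)"
    using x by (intro sum.cong refl) (simp add: sum_unity_root_pow[OF p] dvd_add_diff_iff_eq)
  also have "\<dots> = of_nat p * of_real (pmf P x)"
    using x by simp
  finally show ?thesis .
qed

lemma norm_dft_sq_le:
  assumes p: "prime p" and D: "set_pmf D \<subseteq> {..<p}" and k: "0 < k" "k < p"
  shows "(norm (dft p D k))\<^sup>2 \<le> 1 - 2 * sin (pi / real p) ^ 2 * (1 - (\<Sum>x<p. pmf D x ^ 2))"
proof -
  let ?z = "\<lambda>x. unity_root p ^ (k * x)"
  have p0: "0 < p"
    using p prime_gt_0_nat by blast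
  have sep: "Re (?z x * cnj (?z y)) \<le> cos (2 * pi / real p)" if "y < x" "x < p" for x y
  proof -
    have "?z x = unity_root p ^ (k * (x - y)) * ?z y"
      using that by (simp add: power_add[symmetric] diff_mult_distrib2)
    moreover have "?z y * cnj (?z y) = 1"
      using complex_norm_square[of "?z y"] by simp
    ultimately have "?z x * cnj (?z y) = unity_root p ^ (k * (x - y))"
      by (simp add: mult.assoc)
    moreover have "\<not> p dvd k * (x - y)"
      using p k that by (auto simp: prime_dvd_mult_iff dest: dvd_imp_le)
    ultimately show ?thesis
      using Re_unity_root_pow_le[OF p0] by simp
  qed
  have swap: "Re (a * cnj b) = Re (b * cnj a)" for a b :: complex
    by (simp add: mult.commute)
  have "(norm (dft p D k))\<^sup>2 \<le> 1 - (1 - cos (2 * pi / real p)) * (1 - (\<Sum>x<p. pmf D x ^ 2))"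
    unfolding dft_def
  proof (rule norm_sum_sq_le_collision)
    show "sum (pmf D) {..<p} = 1"
      using D by (intro sum_pmf_eq_1) auto
    fix x y assume "x \<in> {..<p}" "y \<in> {..<p}" "x \<noteq> y"
    then show "Re (?z x * cnj (?z y)) \<le> 1 - (1 - cos (2 * pi / real p))"
      using sep[of x y] sep[of y x] swap[of "?z x" "?z y"] by (cases "y < x") auto
  qed auto
  also have "1 - cos (2 * pi / real p) = 2 * sin (pi / real p) ^ 2"
    using cos_double_sin[of "pi / real p"] by simp
  finally show ?thesis .
qed

lemma pi_div_sq_le:
  assumes "3 \<le> p" shows "(pi / real p)\<^sup>2 \<le> 6/5"
proof -
  have "pi / real p \<le> 16/15"
    using assms pi_approx(2) by (simp add: divide_le_eq)
  then have "(pi / real p)\<^sup>2 \<le> (16/15)\<^sup>2"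
    by (intro power_mono) auto
  moreover have "(16/15 :: real)\<^sup>2 \<le> 6/5"
    by (simp add: power2_eq_square)
  ultimately show ?thesis
    by linarith
qed

lemma norm_dft_le_exp:
  assumes p: "prime p" "3 \<le> p" and D: "set_pmf D \<subseteq> {..<p}"
    and c: "0 < c" "\<forall>x<p. pmf D x \<le> 1 - c" and k: "0 < k" "k < p"
  shows "norm (dft p D k) \<le> exp (- c * (pi / real p)\<^sup>2)"
proof -
  have "(norm (dft p D k))\<^sup>2 \<le> 1 - 2 * sin (pi / real p) ^ 2 * (1 - (\<Sum>x<p. pmf D x ^ 2))"
    by (rule norm_dft_sq_le[OF p(1) D k])
  also have "\<dots> \<le> exp (-2 * c * (pi / real p)\<^sup>2)"
    using D c pi_div_sq_le[OF p(2)] by (intro one_minus_sin_sq_collision_le_exp sum_pmf_eq_1) auto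
  also have "\<dots> = (exp (- c * (pi / real p)\<^sup>2))\<^sup>2"
    by (simp add: exp_double[symmetric])
  finally show ?thesis
    by (rule power2_le_imp_le) simp
qed

lemma norm_dft_pow_le:
  assumes p: "prime p" "3 \<le> p" and D: "set_pmf D \<subseteq> {..<p}"
    and c: "0 < c" "\<forall>x<p. pmf D x \<le> 1 - c" and k: "0 < k" "k < p"
    and M: "2 * real p ^ 2 * ln (real p) / (c * pi ^ 2) \<le> real M"
  shows "norm (dft p D k) ^ M \<le> 1 / real p ^ 2"
proof -
  have exponent: "2 * ln (real p) \<le> real M * c * (pi / real p)\<^sup>2"
  proof -
    have "2 * real p ^ 2 * ln (real p) \<le> real M * (c * pi ^ 2)"
      using c(1) M by (simp add: pos_divide_le_eq)
    then show ?thesis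
      using p(2) by (simp add: power_divide le_divide_eq mult_ac)
  qed
  have "norm (dft p D k) ^ M \<le> exp (- c * (pi / real p)\<^sup>2) ^ M"
    using norm_dft_le_exp[OF p D c k] by (intro power_mono) auto
  also have "\<dots> = exp (- (real M * c * (pi / real p)\<^sup>2))"
    by (simp add: exp_of_nat_mult[symmetric])
  also have "\<dots> \<le> exp (- (2 * ln (real p)))"
    using exponent by simp
  also have "\<dots> = 1 / real p ^ 2"
    using p(2) by (simp add: exp_minus exp_double inverse_eq_divide)
  finally show ?thesis .
qed

lemma dist_uniform_le_sum_norm_dft:
  assumes p: "0 < p" and P: "set_pmf P \<subseteq> {..<p}" and x: "x < p"
  shows "real p * \<bar>pmf P x - 1 / real p\<bar> \<le> (\<Sum>k\<in>{1..<p}. norm (dft p P k))"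
proof -
  let ?c = "\<lambda>k. unity_root p ^ (k * (p - x))"
  have "of_nat p * of_real (pmf P x) = (\<Sum>k<p. dft p P k * ?c k)"
    using dft_inversion[OF p P x] by simp
  also have "\<dots> = 1 + (\<Sum>k\<in>{1..<p}. dft p P k * ?c k)"
    using p by (simp add: atLeast0LessThan[symmetric] sum.atLeast_Suc_lessThan dft_0[OF P])
  finally have "of_real (real p * pmf P x - 1) = (\<Sum>k\<in>{1..<p}. dft p P k * ?c k)"
    by simp
  have "real p * pmf P x - 1 = real p * (pmf P x - 1 / real p)"
    using p by (simp add: right_diff_distrib)
  then have "real p * \<bar>pmf P x - 1 / real p\<bar> = \<bar>real p * pmf P x - 1\<bar>"
    by (simp add: abs_mult)
  also have "\<dots> = norm (\<Sum>k\<in>{1..<p}. dft p P k * ?c k)"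
    by (metis \<open>of_real (real p * pmf P x - 1) = _\<close> norm_of_real)
  also have "\<dots> \<le> (\<Sum>k\<in>{1..<p}. norm (dft p P k * ?c k))"
    by (rule norm_sum)
  also have "\<dots> = (\<Sum>k\<in>{1..<p}. norm (dft p P k))"
    by (simp add: norm_mult)
  finally show ?thesis .
qed

theorem lemma3p3:
  fixes p M :: nat and c :: real and D :: "nat pmf"
  assumes "prime p" and "p \<ge> 3" and "c > 0"
    and "set_pmf D \<subseteq> {..<p}"
    and "\<forall>x<p. pmf D x \<le> 1 - c"
    and "M \<ge> 1"
    and "real M \<ge> 2 * real p ^ 2 * ln (real p) / (c * pi ^ 2)"
  shows "\<forall>x<p. \<bar>pmf (mfold_conv p M D) x - 1 / real p\<bar> \<le> 1 / real p ^ 2"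
proof (intro allI impI)
  fix x assume x: "x < p"
  have p0: "0 < p" and M0: "0 < M"
    using assms(2,6) by auto
  have "real p * \<bar>pmf (mfold_conv p M D) x - 1 / real p\<bar> \<le> (\<Sum>k\<in>{1..<p}. norm (dft p D k) ^ M)"
    using dist_uniform_le_sum_norm_dft[OF p0 set_pmf_mfold_conv[OF p0 assms(4), of M] x]
    by (simp add: dft_mfold_conv[OF p0 assms(4) M0] norm_power)
  also have "\<dots> \<le> of_nat (card {1..<p}) * (1 / real p ^ 2)"
    by (rule sum_bounded_above) (use norm_dft_pow_le assms in auto)
  also have "\<dots> \<le> real p * (1 / real p ^ 2)"
    by (intro mult_right_mono) auto
  finally show "\<bar>pmf (mfold_conv p M D) x - 1 / real p\<bar> \<le> 1 / real p ^ 2"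
    by (rule mult_left_le_imp_le) (use p0 in auto)
qed

end
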